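(* Let $(G,X)$ be a self-similar group with $|X|\ge1$. Then the Boolean inverse monoid $\mathcal G_{\mathrm{tight}}(S^{=}_{G,X})^a$ has exactly one normalized invariant mean $\mu$, namely the one determined on cylinder sets by $\mu(C(\alpha))=|X|^{-|\alpha|}$ for $\alpha\in X^*$ (and extended additively to clopen subsets of $X^\omega$, each of which is a finite disjoint union of cylinders).
   Context: $X$ is a finite set, $X^*$ the finite words over $X$ (including the empty word), $|\alpha|$ the length of $\alpha$, $X^\omega$ the Cantor space of infinite words, $C(\alpha)=\{\alpha x:x\in X^\omega\}$. A self-similar group $(G,X)$: a faithful length-preserving action of a group $G$ on $X^*$ with, for each $g,x$, a unique $g|_x\in G$ such that $g\cdot(x\alpha)=(g\cdot x)(g|_x\cdot\alpha)$; restrictions extend to words and the action extends to $X^\omega$ by $g\cdot(x_1x_2\cdots)=(g\cdot x_1)(g|_{x_1}\cdot x_2)(g|_{x_1x_2}\cdot x_3)\cdots$. $S_{G,X}=\{(\alpha,g,\beta)\}\cup\{0\}$ with $(\alpha,g,\beta)^*=(\beta,g^{-1},\alpha)$ and product $(\alpha,g,\beta)(\gamma,h,\nu)$ equal to $(\alpha(g\cdot\gamma'),g|_{\gamma'}h,\nu)$ if $\gamma=\beta\gamma'$, $(\alpha,g(h^{-1}|_{\beta'})^{-1},\nu(h^{-1}\cdot\beta'))$ if $\beta=\gamma\beta'$, and $0$ otherwise. $S^{=}_{G,X}=\{(\alpha,g,\beta)\in S_{G,X}:|\alpha|=|\beta|\}\cup\{0\}$ is an inverse submonoid with idempotents $(\alpha,1,\alpha)$.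 Its tight groupoid $\mathcal G_{\mathrm{tight}}(S^{=}_{G,X})$ has unit space $X^\omega$ and consists of germs $[(\alpha,g,\beta),\beta x]$ with $d=\beta x$ and $r=\alpha(g\cdot x)$, where $[s,x]=[t,x]$ iff $se=te$ for some idempotent $e=(\delta,1,\delta)$ with $x\in C(\delta)$; its topology is generated by the sets $\{[s,y]:y\in U\}$, $U$ open in the domain of $s$. $\mathcal G_{\mathrm{tight}}(S^{=}_{G,X})^a$ is the Boolean inverse monoid of compact open bisections (under setwise product and inverse); its idempotents are the clopen subsets of $X^\omega$. A normalized invariant mean on a Boolean inverse monoid $S$ is $\mu:E(S)\to[0,\infty)$ with $\mu(1)=1$, $\mu(s^*s)=\mu(ss^* )$ for all $s$, and $\mu(e\vee f)=\mu(e)+\mu(f)$ when $ef=0$. *)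

theory Defs
  imports "HOL-Analysis.Analysis" "HOL-Algebra.Group" "HOL-Library.Sublist"
begin

(* Alphabet X = UNIV of a finite type 'x; X^* = 'x list; X^omega = nat => 'x.
   A self-similar group: a HOL-Algebra group G, an action act on finite words
   and restrictions res g x = g|_x. *)

type_synonym ('g,'x) elt = "('x list \<times> 'g \<times> 'x list) option"
  (* None = 0, Some (alpha,g,beta) = (alpha,g,beta) *)

definition self_similar ::
  "('g,'b) monoid_scheme \<Rightarrow> ('g \<Rightarrow> 'x list \<Rightarrow> 'x list) \<Rightarrow> ('g \<Rightarrow> 'x \<Rightarrow> 'g) \<Rightarrow> bool" where
  "self_similar G act res \<longleftrightarrow>
     group G \<and>
     (\<forall>w. act \<one>\<^bsub>G\<^esub> w = w) \<and>
     (\<forall>g\<in>carrier G. \<forall>h\<in>carrier G. \<forall>w. act (g \<otimes>\<^bsub>G\<^esub> h) w = act g (act h w)) \<and>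
     (\<forall>g\<in>carrier G. \<forall>w. length (act g w) = length w) \<and>
     (\<forall>g\<in>carrier G. \<forall>h\<in>carrier G. (\<forall>w. act g w = act h w) \<longrightarrow> g = h) \<and>
     (\<forall>g\<in>carrier G. \<forall>x. res g x \<in> carrier G) \<and>
     (\<forall>g\<in>carrier G. \<forall>x w. act g (x # w) = act g [x] @ act (res g x) w)"

fun resw :: "('g \<Rightarrow> 'x \<Rightarrow> 'g) \<Rightarrow> 'g \<Rightarrow> 'x list \<Rightarrow> 'g" where
  "resw res g [] = g"
| "resw res g (x # a) = resw res (res g x) a"

definition omega_act ::
  "('g \<Rightarrow> 'x list \<Rightarrow> 'x list) \<Rightarrow> ('g \<Rightarrow> 'x \<Rightarrow> 'g) \<Rightarrow> 'g \<Rightarrow> (nat \<Rightarrow> 'x) \<Rightarrow> (nat \<Rightarrow> 'x)" where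
  "omega_act act res g x = (\<lambda>n. hd (act (resw res g (map x [0..<n])) [x n]))"

definition prepend :: "'x list \<Rightarrow> (nat \<Rightarrow> 'x) \<Rightarrow> (nat \<Rightarrow> 'x)" where
  "prepend a x = (\<lambda>n. if n < length a then a ! n else x (n - length a))"

definition shift :: "nat \<Rightarrow> (nat \<Rightarrow> 'x) \<Rightarrow> (nat \<Rightarrow> 'x)" where
  "shift k x = (\<lambda>n. x (n + k))"

definition cyl :: "'x list \<Rightarrow> (nat \<Rightarrow> 'x) set" where
  "cyl a = {x. \<forall>i<length a. x i = a ! i}"

(* product topology of the discrete topology on X^omega *)
definition cantor_top :: "(nat \<Rightarrow> 'x) topology" where
  "cantor_top = topology_generated_by (range cyl)"

definition clopen :: "(nat \<Rightarrow> 'x) set \<Rightarrow> bool" where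
  "clopen E \<longleftrightarrow> openin cantor_top E \<and> closedin cantor_top E"

definition smult ::
  "('g,'b) monoid_scheme \<Rightarrow> ('g \<Rightarrow> 'x list \<Rightarrow> 'x list) \<Rightarrow> ('g \<Rightarrow> 'x \<Rightarrow> 'g)
    \<Rightarrow> ('g,'x) elt \<Rightarrow> ('g,'x) elt \<Rightarrow> ('g,'x) elt" where
  "smult G act res s t =
     (case (s, t) of
        (Some (a, g, b), Some (c, h, v)) \<Rightarrow>
          if prefix b c then
            (let c' = drop (length b) c in
              Some (a @ act g c', resw res g c' \<otimes>\<^bsub>G\<^esub> h, v))
          else if prefix c b then
            (let b' = drop (length c) b in
              Some (a, g \<otimes>\<^bsub>G\<^esub> inv\<^bsub>G\<^esub> (resw res (inv\<^bsub>G\<^esub> h) b'),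
                    v @ act (inv\<^bsub>G\<^esub> h) b'))
          else None
      | _ \<Rightarrow> None)"

definition Seq :: "('g,'b) monoid_scheme \<Rightarrow> ('g,'x) elt set" where
  "Seq G = insert None {Some (a, g, b) | a g b. g \<in> carrier G \<and> length a = length b}"

definition idem :: "('g,'b) monoid_scheme \<Rightarrow> 'x list \<Rightarrow> ('g,'x) elt" where
  "idem G d = Some (d, \<one>\<^bsub>G\<^esub>, d)"

definition sdom :: "('g,'x) elt \<Rightarrow> (nat \<Rightarrow> 'x) set" where
  "sdom s = (case s of None \<Rightarrow> {} | Some (a, g, b) \<Rightarrow> cyl b)"

definition srng ::
  "('g \<Rightarrow> 'x list \<Rightarrow> 'x list) \<Rightarrow> ('g \<Rightarrow> 'x \<Rightarrow> 'g) \<Rightarrow> ('g,'x) elt \<Rightarrow> (nat \<Rightarrow> 'x) \<Rightarrow> (nat \<Rightarrow> 'x)" where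
  "srng act res s y = (case s of None \<Rightarrow> y
      | Some (a, g, b) \<Rightarrow> prepend a (omega_act act res g (shift (length b) y)))"

type_synonym ('g,'x) germ = "(('g,'x) elt \<times> (nat \<Rightarrow> 'x)) set"

(* the germ [s,y], as the equivalence class of the pair (s,y) *)
definition germ ::
  "('g,'b) monoid_scheme \<Rightarrow> ('g \<Rightarrow> 'x list \<Rightarrow> 'x list) \<Rightarrow> ('g \<Rightarrow> 'x \<Rightarrow> 'g)
    \<Rightarrow> ('g,'x) elt \<Rightarrow> (nat \<Rightarrow> 'x) \<Rightarrow> ('g,'x) germ" where
  "germ G act res s y =
     {(t, y) | t. t \<in> Seq G \<and> t \<noteq> None \<and> y \<in> sdom t \<and>
        (\<exists>d. y \<in> cyl d \<and> smult G act res s (idem G d) = smult G act res t (idem G d))}"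

definition tight_groupoid ::
  "('g,'b) monoid_scheme \<Rightarrow> ('g \<Rightarrow> 'x list \<Rightarrow> 'x list) \<Rightarrow> ('g \<Rightarrow> 'x \<Rightarrow> 'g) \<Rightarrow> ('g,'x) germ set" where
  "tight_groupoid G act res =
     {germ G act res s y | s y. s \<in> Seq G \<and> s \<noteq> None \<and> y \<in> sdom s}"

definition groupoid_top ::
  "('g,'b) monoid_scheme \<Rightarrow> ('g \<Rightarrow> 'x list \<Rightarrow> 'x list) \<Rightarrow> ('g \<Rightarrow> 'x \<Rightarrow> 'g) \<Rightarrow> ('g,'x) germ topology" where
  "groupoid_top G act res = topology_generated_by
     {(\<lambda>y. germ G act res s y) ` U | s U. s \<in> Seq G \<and> s \<noteq> None \<and>
        openin cantor_top U \<and> U \<subseteq> sdom s}"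

definition gdom :: "('g,'x) germ \<Rightarrow> (nat \<Rightarrow> 'x)" where
  "gdom \<gamma> = (THE y. \<exists>s. (s, y) \<in> \<gamma>)"

definition grng ::
  "('g \<Rightarrow> 'x list \<Rightarrow> 'x list) \<Rightarrow> ('g \<Rightarrow> 'x \<Rightarrow> 'g) \<Rightarrow> ('g,'x) germ \<Rightarrow> (nat \<Rightarrow> 'x)" where
  "grng act res \<gamma> = (THE z. \<exists>s y. (s, y) \<in> \<gamma> \<and> z = srng act res s y)"

(* elements of the Boolean inverse monoid G_tight(S^=)^a: compact open bisections *)
definition compact_open_bisection ::
  "('g,'b) monoid_scheme \<Rightarrow> ('g \<Rightarrow> 'x list \<Rightarrow> 'x list) \<Rightarrow> ('g \<Rightarrow> 'x \<Rightarrow> 'g) \<Rightarrow> ('g,'x) germ set \<Rightarrow> bool" where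
  "compact_open_bisection G act res B \<longleftrightarrow>
     B \<subseteq> tight_groupoid G act res \<and>
     openin (groupoid_top G act res) B \<and> compactin (groupoid_top G act res) B \<and>
     inj_on gdom B \<and> inj_on (grng act res) B"

(* normalized invariant mean on G_tight(S^=)^a; its idempotents are the clopen
   subsets of X^omega, with s^*s = d(s) and s s^* = r(s), 1 = X^omega,
   e f = 0 iff disjoint, e \<or> f = union *)
definition normalized_invariant_mean ::
  "('g,'b) monoid_scheme \<Rightarrow> ('g \<Rightarrow> 'x list \<Rightarrow> 'x list) \<Rightarrow> ('g \<Rightarrow> 'x \<Rightarrow> 'g)
    \<Rightarrow> ((nat \<Rightarrow> 'x) set \<Rightarrow> real) \<Rightarrow> bool" where
  "normalized_invariant_mean G act res \<mu> \<longleftrightarrow>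
     (\<forall>E. clopen E \<longrightarrow> \<mu> E \<ge> 0) \<and>
     \<mu> UNIV = 1 \<and>
     (\<forall>B. compact_open_bisection G act res B \<longrightarrow> \<mu> (gdom ` B) = \<mu> (grng act res ` B)) \<and>
     (\<forall>E F. clopen E \<longrightarrow> clopen F \<longrightarrow> E \<inter> F = {} \<longrightarrow> \<mu> (E \<union> F) = \<mu> E + \<mu> F)"

end

theory Submission
  imports Defs
begin

text \<open>
  Everything reduces to counting cylinders of one fixed length. By compactness of the Cantor
  space, a clopen set \<open>E\<close> is, for all large \<open>N\<close>, the disjoint union of the cylinders
  \<open>C(w)\<close> with \<open>|w| = N\<close> contained in it, and the uniform measure gives it mass
  (number of such \<open>w\<close>) / \<open>|X|^N\<close>.

  A compact open bisection is covered by finitely many slices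
  \<open>{[(\<alpha>, g, \<beta>), \<beta>v x] : x}\<close>, and such a slice carries \<open>C(\<beta>v)\<close> bijectively onto
  \<open>C(\<alpha>(g\<cdot>v))\<close>, a cylinder of the same length, since \<open>g\<close> acts by length-preserving
  bijections. At a common level \<open>N\<close> the bisection therefore matches the level-\<open>N\<close> cylinders
  of its domain bijectively with those of its range, so the uniform measure is invariant.

  Conversely the slice \<open>{[(\<alpha>, 1, \<beta>), \<beta>x] : x}\<close> shows that an invariant mean gives the
  same mass to all cylinders of a given length; these \<open>|X|^n\<close> cylinders partition the
  space, which forces \<open>\<mu>(C(\<alpha>)) = |X|^-|\<alpha>|\<close>, and additivity determines \<open>\<mu>\<close> on
  every clopen set.
\<close>

section \<open>Cylinders\<close>

definition seq_prefix :: "(nat \<Rightarrow> 'x) \<Rightarrow> nat \<Rightarrow> 'x list" where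
  "seq_prefix y n = map y [0..<n]"

lemma length_seq_prefix [simp]: "length (seq_prefix y n) = n"
  by (simp add: seq_prefix_def)

lemma nth_seq_prefix [simp]: "i < n \<Longrightarrow> seq_prefix y n ! i = y i"
  by (simp add: seq_prefix_def)

lemma seq_prefix_Suc: "seq_prefix y (Suc n) = seq_prefix y n @ [y n]"
  by (simp add: seq_prefix_def)

lemma take_seq_prefix: "m \<le> n \<Longrightarrow> take m (seq_prefix y n) = seq_prefix y m"
  by (simp add: seq_prefix_def take_map)

lemma seq_eqI_seq_prefix:
  assumes "\<And>n. seq_prefix y (k + n) = seq_prefix z (k + n)"
  shows "y = z"
proof
  fix i
  have "seq_prefix y (k + Suc i) ! i = seq_prefix z (k + Suc i) ! i" by (simp only: assms)
  then show "y i = z i" by simp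
qed

lemma mem_cyl_iff: "y \<in> cyl w \<longleftrightarrow> seq_prefix y (length w) = w"
  by (auto simp: cyl_def list_eq_iff_nth_eq)

lemma mem_cyl_seq_prefix [simp]: "y \<in> cyl (seq_prefix y n)"
  by (simp add: mem_cyl_iff)

lemma cyl_Nil [simp]: "cyl [] = UNIV"
  by (simp add: cyl_def)

lemma cyl_append_subset: "cyl (w @ v) \<subseteq> cyl w"
  by (auto simp: cyl_def nth_append)

lemma cyl_seq_prefix_mono: "m \<le> n \<Longrightarrow> cyl (seq_prefix y n) \<subseteq> cyl (seq_prefix y m)"
  by (auto simp: cyl_def)

lemma cyl_seq_prefix_subset: "y \<in> cyl w \<Longrightarrow> length w \<le> n \<Longrightarrow> cyl (seq_prefix y n) \<subseteq> cyl w"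
  by (metis mem_cyl_iff cyl_seq_prefix_mono)

lemma cyl_disjoint: "length v = length w \<Longrightarrow> v \<noteq> w \<Longrightarrow> cyl v \<inter> cyl w = {}"
  by (auto simp: mem_cyl_iff)

lemma seq_prefix_prepend: "seq_prefix (prepend w z) (length w + n) = w @ seq_prefix z n"
  by (rule nth_equalityI) (auto simp: prepend_def nth_append)

lemma shift_prepend [simp]: "shift (length w) (prepend w z) = z"
  by (auto simp: shift_def prepend_def)

lemma prepend_prepend: "prepend a (prepend u z) = prepend (a @ u) z"
  by (auto simp: prepend_def nth_append fun_eq_iff)

lemma prepend_shift: "y \<in> cyl w \<Longrightarrow> prepend w (shift (length w) y) = y"
  by (auto simp: prepend_def shift_def cyl_def)

lemma cyl_eq_range_prepend: "cyl w = range (prepend w)"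
proof (intro equalityI subsetI)
  fix y assume "y \<in> cyl w"
  then show "y \<in> range (prepend w)" by (metis prepend_shift rangeI)
qed (auto simp: prepend_def cyl_def)

lemma cyl_nonempty: "cyl w \<noteq> {}"
  by (simp add: cyl_eq_range_prepend)

lemma prefix_seq_prefix_iff: "prefix (seq_prefix y m) (seq_prefix y n) \<longleftrightarrow> m \<le> n"
proof
  assume "prefix (seq_prefix y m) (seq_prefix y n)"
  then show "m \<le> n" using prefix_length_le by fastforce
next
  assume "m \<le> n"
  then show "prefix (seq_prefix y m) (seq_prefix y n)" by (metis take_is_prefix take_seq_prefix)
qed

lemma cyl_prefix_cases:
  assumes "y \<in> cyl u" "y \<in> cyl v"
  shows "prefix u v \<or> prefix v u"
proof -
  have "u = seq_prefix y (length u)" "v = seq_prefix y (length v)"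
    using assms by (simp_all add: mem_cyl_iff)
  then show ?thesis using prefix_seq_prefix_iff nle_le by metis
qed

lemma shift_in_cyl_append:
  assumes "y \<in> cyl (b @ v)"
  shows "shift (length b) y = prepend v (shift (length (b @ v)) y)"
proof -
  have "y = prepend b (prepend v (shift (length (b @ v)) y))"
    using prepend_shift[OF assms] by (simp only: prepend_prepend)
  then show ?thesis by (metis shift_prepend)
qed

lemma finite_lists_length: "finite {w :: 'x::finite list. length w = N}"
  using finite_lists_length_eq[of "UNIV :: 'x set" N] by simp

section \<open>The Cantor topology\<close>

lemma seq_from_extensions:
  assumes "Q []" and extend: "\<And>w. Q w \<Longrightarrow> \<exists>c. Q (w @ [c])"
  obtains y where "\<And>n. Q (seq_prefix y n)"
proof -
  define path where "path = rec_nat [] (\<lambda>_ w. w @ [SOME c. Q (w @ [c])])"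
  have path_Suc: "path (Suc n) = path n @ [SOME c. Q (path n @ [c])]" for n
    by (simp add: path_def)
  have Q_path: "Q (path n)" for n
  proof (induction n)
    case 0 then show ?case using assms(1) by (simp add: path_def)
  next
    case (Suc n)
    then show ?case unfolding path_Suc by (rule someI_ex[OF extend])
  qed
  define y where "y i = last (path (Suc i))" for i
  have "seq_prefix y n = path n" for n
    by (induction n) (simp_all add: seq_prefix_Suc y_def path_Suc, simp add: path_def seq_prefix_def)
  with Q_path have "Q (seq_prefix y n)" for n by simp
  then show ?thesis by (rule that)
qed

lemma fan_theorem:
  fixes P :: "'x::finite list \<Rightarrow> bool"
  assumes mono: "\<And>w v. P w \<Longrightarrow> P (w @ v)"
    and bar: "\<And>y. \<exists>n. P (seq_prefix y n)"
  shows "\<exists>N. \<forall>w. length w = N \<longrightarrow> P w"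
proof -
  define good where "good w \<longleftrightarrow> (\<exists>k. \<forall>v. k \<le> length v \<longrightarrow> P (w @ v))" for w
  \<comment> \<open>This is where the alphabet must be finite: \<open>Max (range k)\<close> bounds every \<open>k c\<close>.\<close>
  have extend_bad: "\<exists>c. \<not> good (w @ [c])" if "\<not> good w" for w
  proof (rule ccontr)
    assume "\<nexists>c. \<not> good (w @ [c])"
    then have "\<forall>c. \<exists>k. \<forall>v. k \<le> length v \<longrightarrow> P (w @ [c] @ v)"
      by (simp add: good_def)
    then obtain k where k: "\<And>c v. k c \<le> length v \<Longrightarrow> P (w @ [c] @ v)"
      by metis
    have "P (w @ v)" if long: "Suc (Max (range k)) \<le> length v" for v
    proof -
      obtain c v' where v: "v = c # v'" using long by (cases v) auto
      have "k c \<le> Max (range k)" by (simp add: Max_ge)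
      then show ?thesis using k[of c v'] long v by simp
    qed
    then have "good w" unfolding good_def by blast
    with that show False by simp
  qed
  have "good []"
  proof (rule ccontr)
    assume "\<not> good []"
    then obtain y where "\<And>n. \<not> good (seq_prefix y n)"
      using seq_from_extensions[of "\<lambda>w. \<not> good w"] extend_bad by blast
    moreover obtain n where "P (seq_prefix y n)" using bar by blast
    ultimately show False unfolding good_def using mono by auto
  qed
  then show ?thesis unfolding good_def by (metis append_Nil order_refl)
qed

lemma topspace_cantor_top [simp]: "topspace cantor_top = UNIV"
proof -
  have "UNIV \<in> range (cyl :: 'x list \<Rightarrow> _)" by (metis cyl_Nil rangeI)
  then show ?thesis unfolding cantor_top_def topology_generated_by_topspace by blast
qed

lemma openin_cantor_cyl: "openin cantor_top (cyl w)"
  unfolding cantor_top_def openin_topology_generated_by_iff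
  by (rule generate_topology_on.Basis) simp

lemma openin_cantor_iff: "openin cantor_top U \<longleftrightarrow> (\<forall>y\<in>U. \<exists>n. cyl (seq_prefix y n) \<subseteq> U)"
proof
  assume "openin cantor_top U"
  then have "generate_topology_on (range cyl) U"
    unfolding cantor_top_def by (rule openin_topology_generated_by)
  then show "\<forall>y\<in>U. \<exists>n. cyl (seq_prefix y n) \<subseteq> U"
  proof induction
    case (Int a b)
    show ?case
    proof
      fix y assume "y \<in> a \<inter> b"
      then obtain n m where "cyl (seq_prefix y n) \<subseteq> a" "cyl (seq_prefix y m) \<subseteq> b"
        using Int.IH by blast
      then have "cyl (seq_prefix y (max n m)) \<subseteq> a \<inter> b"
        using cyl_seq_prefix_mono[of n "max n m" y] cyl_seq_prefix_mono[of m "max n m" y] by auto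
      then show "\<exists>k. cyl (seq_prefix y k) \<subseteq> a \<inter> b" by blast
    qed
  next
    case (Basis s)
    then obtain w where "s = cyl w" by blast
    then show ?case using mem_cyl_iff by (metis order_refl)
  qed blast+
next
  assume "\<forall>y\<in>U. \<exists>n. cyl (seq_prefix y n) \<subseteq> U"
  then have "U = \<Union> (cyl ` {w. cyl w \<subseteq> U})"
    using mem_cyl_seq_prefix by blast
  moreover have "openin cantor_top (\<Union> (cyl ` {w. cyl w \<subseteq> U}))"
    by (intro openin_Union) (auto intro: openin_cantor_cyl)
  ultimately show "openin cantor_top U" by simp
qed

lemma closedin_cantor_cyl: "closedin cantor_top (cyl w)"
proof -
  have "cyl (seq_prefix y (length w)) \<subseteq> - cyl w" if "y \<notin> cyl w" for y
    using that cyl_disjoint[of "seq_prefix y (length w)" w] by (auto simp: mem_cyl_iff)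
  then show ?thesis
    unfolding closedin_def openin_cantor_iff by (auto simp: Compl_eq_Diff_UNIV)
qed

lemma compact_cantor: "compactin cantor_top (UNIV :: (nat \<Rightarrow> 'x::finite) set)"
  unfolding compactin_def
proof (intro conjI allI impI)
  fix \<U> :: "(nat \<Rightarrow> 'x) set set"
  assume \<U>: "(\<forall>U\<in>\<U>. openin cantor_top U) \<and> UNIV \<subseteq> \<Union>\<U>"
  have "\<exists>N. \<forall>w::'x list. length w = N \<longrightarrow> (\<exists>U\<in>\<U>. cyl w \<subseteq> U)"
  proof (rule fan_theorem)
    show "\<exists>U\<in>\<U>. cyl (w @ v) \<subseteq> U" if "\<exists>U\<in>\<U>. cyl w \<subseteq> U" for w v :: "'x list"
      using that cyl_append_subset by blast
    fix y :: "nat \<Rightarrow> 'x"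
    obtain U where U: "U \<in> \<U>" "y \<in> U" using \<U> by blast
    then have "openin cantor_top U" using \<U> by blast
    then obtain n where "cyl (seq_prefix y n) \<subseteq> U"
      using U(2) unfolding openin_cantor_iff by blast
    then show "\<exists>n. \<exists>U\<in>\<U>. cyl (seq_prefix y n) \<subseteq> U" using U(1) by blast
  qed
  then obtain N where "\<forall>w::'x list. \<exists>U. length w = N \<longrightarrow> U \<in> \<U> \<and> cyl w \<subseteq> U"
    by blast
  then obtain F where F: "\<And>w::'x list. length w = N \<Longrightarrow> F w \<in> \<U> \<and> cyl w \<subseteq> F w"
    by (metis choice)
  show "\<exists>\<F>. finite \<F> \<and> \<F> \<subseteq> \<U> \<and> UNIV \<subseteq> \<Union>\<F>"
  proof (intro exI conjI)
    show "finite (F ` {w. length w = N})" by (simp add: finite_lists_length)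
    show "F ` {w. length w = N} \<subseteq> \<U>" using F by blast
    show "UNIV \<subseteq> \<Union> (F ` {w. length w = N})"
    proof
      fix y :: "nat \<Rightarrow> 'x"
      have "y \<in> F (seq_prefix y N)" using F[of "seq_prefix y N"] by auto
      then show "y \<in> \<Union> (F ` {w. length w = N})"
        using length_seq_prefix by blast
    qed
  qed
qed simp

section \<open>Clopen sets and the uniform mean\<close>

definition determined :: "nat \<Rightarrow> (nat \<Rightarrow> 'x) set \<Rightarrow> bool" where
  "determined N E \<longleftrightarrow> (\<forall>y\<in>E. cyl (seq_prefix y N) \<subseteq> E)"

definition level_words :: "nat \<Rightarrow> (nat \<Rightarrow> 'x) set \<Rightarrow> 'x list set" where
  "level_words N E = {w. length w = N \<and> cyl w \<subseteq> E}"

lemma determined_mono: "determined N E \<Longrightarrow> N \<le> M \<Longrightarrow> determined M E"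
  unfolding determined_def using cyl_seq_prefix_mono[of N M] by blast

lemma determined_Compl:
  assumes "determined N E"
  shows "determined N (- E)"
  unfolding determined_def
proof (intro ballI subsetI)
  fix y z assume "y \<in> - E" "z \<in> cyl (seq_prefix y N)"
  then have "seq_prefix z N = seq_prefix y N" "y \<in> cyl (seq_prefix z N)"
    by (simp_all add: mem_cyl_iff)
  with \<open>y \<in> - E\<close> assms show "z \<in> - E" unfolding determined_def by blast
qed

lemma determined_Union: "(\<And>E. E \<in> \<E> \<Longrightarrow> determined N E) \<Longrightarrow> determined N (\<Union> \<E>)"
  unfolding determined_def by blast

lemma determined_cyl: "length w \<le> N \<Longrightarrow> determined N (cyl w)"
  unfolding determined_def using cyl_seq_prefix_subset by blast

lemma Union_cyl_level_words:
  assumes "determined N E"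
  shows "\<Union> (cyl ` level_words N E) = E"
proof (intro equalityI subsetI)
  fix y assume "y \<in> E"
  then have "seq_prefix y N \<in> level_words N E"
    using assms by (simp add: determined_def level_words_def)
  then show "y \<in> \<Union> (cyl ` level_words N E)" using mem_cyl_seq_prefix by blast
qed (auto simp: level_words_def)

lemma clopen_iff_determined: "clopen E \<longleftrightarrow> (\<exists>N. determined N (E :: (nat \<Rightarrow> 'x::finite) set))"
proof
  assume "clopen E"
  then have open_E: "openin cantor_top E" and compact_E: "compactin cantor_top E"
    using closed_compactin[OF compact_cantor] unfolding clopen_def by auto
  have "E \<subseteq> \<Union> (cyl ` {w. cyl w \<subseteq> E})"
  proof
    fix y assume "y \<in> E"
    then obtain n where "cyl (seq_prefix y n) \<subseteq> E"
      using open_E unfolding openin_cantor_iff by blast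
    then show "y \<in> \<Union> (cyl ` {w. cyl w \<subseteq> E})" using mem_cyl_seq_prefix by blast
  qed
  then obtain \<F> where \<F>: "finite \<F>" "\<F> \<subseteq> cyl ` {w. cyl w \<subseteq> E}" "E \<subseteq> \<Union> \<F>"
    using compactinD[OF compact_E] openin_cantor_cyl by (metis (no_types, lifting) imageE)
  obtain V where V: "finite V" "V \<subseteq> {w. cyl w \<subseteq> E}" "\<F> = cyl ` V"
    using finite_subset_image[OF \<F>(1,2)] by blast
  define N where "N = Max (insert 0 (length ` V))"
  have "determined N (\<Union> (cyl ` V))"
    using V(1) by (intro determined_Union) (auto intro: determined_cyl simp: N_def)
  moreover have "\<Union> (cyl ` V) = E" using V \<F> by blast
  ultimately show "\<exists>N. determined N E" by blast
next
  assume "\<exists>N. determined N E"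
  then obtain N where "determined N E" "determined N (- E)"
    using determined_Compl by blast
  then have "openin cantor_top E" "openin cantor_top (- E)"
    unfolding openin_cantor_iff determined_def by blast+
  then show "clopen E"
    by (simp add: clopen_def closedin_def Compl_eq_Diff_UNIV)
qed

lemma finite_level_words: "finite (level_words N (E :: (nat \<Rightarrow> 'x::finite) set))"
  by (rule finite_subset[OF _ finite_lists_length[of N]]) (auto simp: level_words_def)

lemma level_words_Suc:
  assumes "determined N E"
  shows "level_words (Suc N) E = (\<lambda>(w, c). w @ [c]) ` (level_words N E \<times> UNIV)"
proof (intro equalityI subsetI)
  fix u assume u: "u \<in> level_words (Suc N) E"
  obtain y where y: "y \<in> cyl u" using cyl_nonempty by blast
  then have "u = seq_prefix y N @ [y N]"
    using u by (simp add: level_words_def mem_cyl_iff seq_prefix_Suc)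
  moreover have "seq_prefix y N \<in> level_words N E"
    using assms u y unfolding determined_def level_words_def by auto
  ultimately show "u \<in> (\<lambda>(w, c). w @ [c]) ` (level_words N E \<times> UNIV)" by force
next
  fix u assume "u \<in> (\<lambda>(w, c). w @ [c]) ` (level_words N E \<times> UNIV)"
  then obtain w c where "u = w @ [c]" "w \<in> level_words N E" by auto
  then show "u \<in> level_words (Suc N) E"
    using cyl_append_subset[of w "[c]"] by (auto simp: level_words_def)
qed

lemma card_level_words_Suc:
  assumes "determined N (E :: (nat \<Rightarrow> 'x::finite) set)"
  shows "card (level_words (Suc N) E) = card (level_words N E) * CARD('x)"
proof -
  have "inj_on (\<lambda>(w, c). w @ [c]) (level_words N E \<times> (UNIV :: 'x set))"
    by (auto simp: inj_on_def)
  then show ?thesis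
    by (simp add: level_words_Suc[OF assms] card_image card_cartesian_product)
qed

lemma level_words_density_eq:
  assumes "determined N (E :: (nat \<Rightarrow> 'x::finite) set)" "N \<le> M"
  shows "real (card (level_words M E)) / real CARD('x) ^ M
       = real (card (level_words N E)) / real CARD('x) ^ N"
  using assms(2)
proof (induction M rule: dec_induct)
  case (step M)
  have "determined M E" using assms(1) step.hyps(1) by (rule determined_mono)
  then show ?case using step.IH by (simp add: card_level_words_Suc)
qed simp

text \<open>
  By \<open>level_words_density_eq\<close> every level at which \<open>E\<close> is determined gives the same value;
  on sets that are not clopen the value is meaningless.
\<close>

definition uniform_mean :: "(nat \<Rightarrow> 'x::finite) set \<Rightarrow> real" where
  "uniform_mean E =
     (let N = LEAST N. determined N E in real (card (level_words N E)) / real CARD('x) ^ N)"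

lemma uniform_mean_nonneg: "0 \<le> uniform_mean E"
  by (simp add: uniform_mean_def Let_def)

lemma uniform_mean_eq:
  fixes E :: "(nat \<Rightarrow> 'x::finite) set"
  assumes "determined N E"
  shows "uniform_mean E = real (card (level_words N E)) / real CARD('x) ^ N"
proof -
  let ?L = "LEAST N. determined N E"
  have "determined ?L E" using assms by (rule LeastI)
  moreover have "?L \<le> N" using assms by (rule Least_le)
  ultimately show ?thesis
    unfolding uniform_mean_def Let_def by (rule level_words_density_eq[symmetric])
qed

lemma level_words_Union_cyl:
  assumes "V \<subseteq> {w. length w = N}"
  shows "level_words N (\<Union> (cyl ` V)) = V"
proof (intro equalityI subsetI)
  fix w assume w: "w \<in> level_words N (\<Union> (cyl ` V))"
  obtain y where y: "y \<in> cyl w" using cyl_nonempty by blast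
  then obtain v where "v \<in> V" "y \<in> cyl v" using w by (auto simp: level_words_def)
  moreover have "length v = length w" using assms w \<open>v \<in> V\<close> by (auto simp: level_words_def)
  ultimately show "w \<in> V" using y cyl_disjoint by blast
qed (use assms in \<open>auto simp: level_words_def\<close>)

lemma uniform_mean_Union_cyl:
  fixes V :: "'x::finite list set"
  assumes "V \<subseteq> {w. length w = N}"
  shows "uniform_mean (\<Union> (cyl ` V)) = real (card V) / real CARD('x) ^ N"
proof -
  have "determined N (\<Union> (cyl ` V))"
    using assms by (intro determined_Union) (auto intro: determined_cyl)
  then have "uniform_mean (\<Union> (cyl ` V)) =
      real (card (level_words N (\<Union> (cyl ` V)))) / real CARD('x) ^ N"
    by (rule uniform_mean_eq)
  with level_words_Union_cyl[OF assms] show ?thesis by simp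
qed

lemma uniform_mean_cyl: "uniform_mean (cyl (a :: 'x::finite list)) = inverse (real CARD('x) ^ length a)"
  using uniform_mean_Union_cyl[of "{a}" "length a"] by (simp add: field_simps)

lemma uniform_mean_UNIV: "uniform_mean (UNIV :: (nat \<Rightarrow> 'x::finite) set) = 1"
  using uniform_mean_cyl[of "[] :: 'x list"] by simp

lemma uniform_mean_additive:
  fixes E F :: "(nat \<Rightarrow> 'x::finite) set"
  assumes "clopen E" "clopen F" "E \<inter> F = {}"
  shows "uniform_mean (E \<union> F) = uniform_mean E + uniform_mean F"
proof -
  obtain N1 N2 where "determined N1 E" "determined N2 F"
    using assms(1,2) unfolding clopen_iff_determined by blast
  then have N: "determined (max N1 N2) E" "determined (max N1 N2) F"
    by (auto elim: determined_mono)
  define V where "V = level_words (max N1 N2) E \<union> level_words (max N1 N2) F"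
  have "level_words (max N1 N2) E \<inter> level_words (max N1 N2) F = {}"
    using assms(3) cyl_nonempty by (fastforce simp: level_words_def)
  then have "card V = card (level_words (max N1 N2) E) + card (level_words (max N1 N2) F)"
    unfolding V_def by (simp add: finite_level_words card_Un_disjoint)
  moreover have "E \<union> F = \<Union> (cyl ` V)"
    using Union_cyl_level_words[OF N(1)] Union_cyl_level_words[OF N(2)] unfolding V_def by blast
  moreover have "V \<subseteq> {w. length w = max N1 N2}"
    by (auto simp: V_def level_words_def)
  ultimately have "uniform_mean (E \<union> F) =
      real (card (level_words (max N1 N2) E) + card (level_words (max N1 N2) F))
        / real CARD('x) ^ max N1 N2"
    using uniform_mean_Union_cyl by metis
  then show ?thesis
    by (simp add: uniform_mean_eq[OF N(1)] uniform_mean_eq[OF N(2)] add_divide_distrib)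
qed

lemma additive_Union_cyl:
  fixes \<nu> :: "(nat \<Rightarrow> 'x::finite) set \<Rightarrow> real"
  assumes add: "\<And>E F. clopen E \<Longrightarrow> clopen F \<Longrightarrow> E \<inter> F = {} \<Longrightarrow> \<nu> (E \<union> F) = \<nu> E + \<nu> F"
    and V: "V \<subseteq> {w. length w = N}"
  shows "\<nu> (\<Union> (cyl ` V)) = (\<Sum>w\<in>V. \<nu> (cyl w))"
proof -
  have "finite V" using V finite_lists_length by (rule finite_subset)
  have clopen_Union: "clopen (\<Union> (cyl ` U))" if "U \<subseteq> {w. length w = N}" for U :: "'x list set"
  proof -
    have "determined N (\<Union> (cyl ` U))"
      using that by (intro determined_Union) (auto intro: determined_cyl)
    then show ?thesis by (rule clopen_iff_determined[THEN iffD2, OF exI])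
  qed
  have "\<nu> {} = 0"
    using add[of "{}" "{}"] clopen_Union[of "{}"] by simp
  from \<open>finite V\<close> V show ?thesis
  proof (induction V rule: finite_induct)
    case (insert w V)
    have "cyl w \<inter> cyl u = {}" if "u \<in> V" for u
    proof (rule cyl_disjoint)
      show "length w = length u" "w \<noteq> u" using insert.hyps(2) insert.prems that by auto
    qed
    then have "cyl w \<inter> \<Union> (cyl ` V) = {}" by blast
    moreover have "clopen (cyl w)" "clopen (\<Union> (cyl ` V))"
      using clopen_Union[of "{w}"] clopen_Union[of V] insert.prems by auto
    ultimately show ?case using add insert by simp
  qed (simp add: \<open>\<nu> {} = 0\<close>)
qed

section \<open>Self-similar actions\<close>

locale self_similar_group =
  fixes G :: "('g, 'b) monoid_scheme" (structure)
    and act :: "'g \<Rightarrow> 'x::finite list \<Rightarrow> 'x list"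
    and res :: "'g \<Rightarrow> 'x \<Rightarrow> 'g"
  assumes self_similar: "self_similar G act res"
begin

sublocale group G
  using self_similar unfolding self_similar_def by blast

lemma act_one [simp]: "act \<one> w = w"
  using self_similar unfolding self_similar_def by blast

lemma act_mult: "g \<in> carrier G \<Longrightarrow> h \<in> carrier G \<Longrightarrow> act (g \<otimes> h) w = act g (act h w)"
  using self_similar unfolding self_similar_def by blast

lemma length_act [simp]: "g \<in> carrier G \<Longrightarrow> length (act g w) = length w"
  using self_similar unfolding self_similar_def by blast

lemma act_faithful: "g \<in> carrier G \<Longrightarrow> h \<in> carrier G \<Longrightarrow> (\<And>w. act g w = act h w) \<Longrightarrow> g = h"
  using self_similar unfolding self_similar_def by blast

lemma res_closed [simp]: "g \<in> carrier G \<Longrightarrow> res g x \<in> carrier G"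
  using self_similar unfolding self_similar_def by blast

lemma act_Cons: "g \<in> carrier G \<Longrightarrow> act g (x # w) = act g [x] @ act (res g x) w"
  using self_similar unfolding self_similar_def by blast

lemma resw_closed [simp]: "g \<in> carrier G \<Longrightarrow> resw res g w \<in> carrier G"
  by (induction w arbitrary: g) simp_all

lemma act_Nil [simp]: "g \<in> carrier G \<Longrightarrow> act g [] = []"
  by (metis length_0_conv length_act list.size(3))

lemma act_append: "g \<in> carrier G \<Longrightarrow> act g (u @ v) = act g u @ act (resw res g u) v"
proof (induction u arbitrary: g)
  case (Cons x u)
  have "act g ((x # u) @ v) = act g [x] @ act (res g x) (u @ v)"
    using act_Cons[OF Cons.prems, of x "u @ v"] by simp
  also have "\<dots> = act g (x # u) @ act (resw res g (x # u)) v"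
    using Cons.IH Cons.prems act_Cons[OF Cons.prems, of x u] by simp
  finally show ?case .
qed simp

lemma resw_append: "resw res g (u @ v) = resw res (resw res g u) v"
  by (induction u arbitrary: g) simp_all

lemma res_one [simp]: "res \<one> x = \<one>"
proof (rule act_faithful)
  fix w
  have "x # w = x # act (res \<one> x) w"
    using act_Cons[of \<one> x w] by (simp only: act_one one_closed append_Cons append_Nil)
  then show "act (res \<one> x) w = act \<one> w" by (metis act_one list.inject)
qed simp_all

lemma resw_one [simp]: "resw res \<one> w = \<one>"
  by (induction w) simp_all

lemma act_inv_act: "g \<in> carrier G \<Longrightarrow> act (inv g) (act g w) = w"
  by (simp add: act_mult[symmetric])

lemma act_act_inv: "g \<in> carrier G \<Longrightarrow> act g (act (inv g) w) = w"
  by (simp add: act_mult[symmetric])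

lemma seq_prefix_omega_act:
  assumes "g \<in> carrier G"
  shows "seq_prefix (omega_act act res g y) n = act g (seq_prefix y n)"
proof (induction n)
  case (Suc n)
  let ?h = "resw res g (seq_prefix y n)"
  have "length (act ?h [y n]) = Suc 0" using assms by simp
  then obtain c where c: "act ?h [y n] = [c]" by (auto simp: length_Suc_conv)
  then have "omega_act act res g y n = c" by (simp add: omega_act_def seq_prefix_def)
  then show ?case using Suc.IH c assms by (simp add: seq_prefix_Suc act_append)
qed (simp add: assms seq_prefix_def)

lemma omega_act_prepend:
  assumes "g \<in> carrier G"
  shows "omega_act act res g (prepend w z) = prepend (act g w) (omega_act act res (resw res g w) z)"
proof (rule seq_eqI_seq_prefix[where k = "length w"])
  fix n
  show "seq_prefix (omega_act act res g (prepend w z)) (length w + n) =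
      seq_prefix (prepend (act g w) (omega_act act res (resw res g w) z)) (length w + n)"
    using assms seq_prefix_prepend[of "act g w"]
    by (simp add: seq_prefix_omega_act seq_prefix_prepend act_append)
qed

lemma inj_omega_act:
  assumes "g \<in> carrier G"
  shows "inj (omega_act act res g)"
proof
  fix y z assume "omega_act act res g y = omega_act act res g z"
  then have "act g (seq_prefix y n) = act g (seq_prefix z n)" for n
    using assms by (metis seq_prefix_omega_act)
  then show "y = z"
    using assms by (intro seq_eqI_seq_prefix[where k = 0]) (metis act_inv_act)
qed

lemma surj_omega_act:
  assumes "g \<in> carrier G"
  shows "surj (omega_act act res g)"
proof -
  have "z \<in> range (omega_act act res g)" for z
  proof -
    define y where "y i = act (inv g) (seq_prefix z (Suc i)) ! i" for i
    have "seq_prefix y n = act (inv g) (seq_prefix z n)" for n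
    proof (rule nth_equalityI)
      fix i assume "i < length (seq_prefix y n)"
      then have "Suc i \<le> n" by simp
      define d where "d = drop (Suc i) (seq_prefix z n)"
      have "seq_prefix z n = seq_prefix z (Suc i) @ d"
        using \<open>Suc i \<le> n\<close> unfolding d_def by (metis append_take_drop_id take_seq_prefix)
      then have "act (inv g) (seq_prefix z n) ! i = act (inv g) (seq_prefix z (Suc i)) ! i"
        using assms by (simp add: act_append nth_append)
      then show "seq_prefix y n ! i = act (inv g) (seq_prefix z n) ! i"
        using \<open>Suc i \<le> n\<close> by (simp add: y_def)
    qed (simp add: assms)
    then have "omega_act act res g y = z"
      using assms by (intro seq_eqI_seq_prefix[where k = 0]) (simp add: seq_prefix_omega_act act_act_inv)
    then show ?thesis by blast
  qed
  then show ?thesis by blast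
qed

lemma srng_Some: "srng act res (Some (a, g, b)) y = prepend a (omega_act act res g (shift (length b) y))"
  by (simp add: srng_def)

lemma srng_image_cyl:
  assumes "g \<in> carrier G"
  shows "srng act res (Some (a, g, b)) ` cyl (b @ v) = cyl (a @ act g v)"
proof -
  let ?h = "resw res g v"
  have "srng act res (Some (a, g, b)) (prepend (b @ v) z)
      = prepend (a @ act g v) (omega_act act res ?h z)" for z
  proof -
    have "shift (length b) (prepend (b @ v) z) = prepend v z"
      using shift_prepend[of b "prepend v z"] by (simp add: prepend_prepend)
    then have "srng act res (Some (a, g, b)) (prepend (b @ v) z)
        = prepend a (prepend (act g v) (omega_act act res ?h z))"
      using assms by (simp add: srng_Some omega_act_prepend)
    then show ?thesis by (simp only: prepend_prepend)
  qed
  then have "srng act res (Some (a, g, b)) ` range (prepend (b @ v))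
      = prepend (a @ act g v) ` range (omega_act act res ?h)"
    by (simp only: image_image)
  also have "\<dots> = cyl (a @ act g v)"
    using assms surj_omega_act[of ?h] by (simp add: cyl_eq_range_prepend)
  finally show ?thesis by (simp only: cyl_eq_range_prepend)
qed

section \<open>Germs\<close>

lemma Seq_Some [simp]: "Some (a, g, b) \<in> Seq G \<longleftrightarrow> g \<in> carrier G \<and> length a = length b"
  by (auto simp: Seq_def)

lemma Seq_cases:
  assumes "s \<in> Seq G" "s \<noteq> None"
  obtains a g b where "s = Some (a, g, b)" "g \<in> carrier G" "length a = length b"
  using assms by (auto simp: Seq_def)

lemma sdom_Some [simp]: "sdom (Some (a, g, b)) = cyl b"
  by (simp add: sdom_def)

lemma smult_idem_extend:
  assumes "g \<in> carrier G"
  shows "smult G act res (Some (a, g, b)) (idem G (b @ v)) = Some (a @ act g v, resw res g v, b @ v)"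
  using assms by (simp add: smult_def idem_def Let_def)

lemma smult_idem_shorten:
  assumes "g \<in> carrier G" "prefix d b"
  shows "smult G act res (Some (a, g, b)) (idem G d) = Some (a, g, b)"
proof (cases "d = b")
  case True
  then show ?thesis using assms(1) smult_idem_extend[OF assms(1), of a b "[]"] by simp
next
  case False
  obtain u where "b = d @ u" using assms(2) by (auto simp: prefix_def)
  with False assms(1) show ?thesis by (simp add: smult_def idem_def Let_def)
qed

lemma smult_idem_idem:
  assumes "s \<in> Seq G" "s \<noteq> None" "y \<in> sdom s" "y \<in> cyl d" "y \<in> cyl e"
    and "length d \<le> length e"
  shows "smult G act res (smult G act res s (idem G d)) (idem G e) = smult G act res s (idem G e)"
proof -
  obtain a g b where s: "s = Some (a, g, b)" "g \<in> carrier G" using assms(1,2) by (rule Seq_cases)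
  have "prefix d e" using assms(4-6) cyl_prefix_cases prefix_length_le
    by (metis prefix_length_prefix prefix_order.order_refl)
  show ?thesis
  proof (cases "prefix b d")
    case True
    then obtain v u where "d = b @ v" "e = b @ v @ u"
      using \<open>prefix d e\<close> by (auto simp: prefix_def)
    then show ?thesis
      using s smult_idem_extend[of "resw res g v" "a @ act g v" "b @ v" u]
      by (simp add: smult_idem_extend act_append resw_append)
  next
    case False
    then have "prefix d b" using assms(3,4) s(1) cyl_prefix_cases by auto
    then show ?thesis using s by (simp add: smult_idem_shorten)
  qed
qed

lemma srng_smult_idem:
  assumes "s \<in> Seq G" "s \<noteq> None" "y \<in> sdom s" "y \<in> cyl d"
  shows "srng act res (smult G act res s (idem G d)) y = srng act res s y"
proof -
  obtain a g b where s: "s = Some (a, g, b)" "g \<in> carrier G" using assms(1,2) by (rule Seq_cases)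
  show ?thesis
  proof (cases "prefix b d")
    case True
    then obtain v where d: "d = b @ v" by (auto simp: prefix_def)
    then have "shift (length b) y = prepend v (shift (length d) y)"
      using assms(4) shift_in_cyl_append by blast
    then show ?thesis
      using s by (simp add: d smult_idem_extend srng_Some omega_act_prepend prepend_prepend)
  next
    case False
    then have "prefix d b" using assms(3,4) s(1) cyl_prefix_cases by auto
    then show ?thesis using s by (simp add: smult_idem_shorten)
  qed
qed

definition agree_near :: "('g, 'x) elt \<Rightarrow> (nat \<Rightarrow> 'x) \<Rightarrow> ('g, 'x) elt \<Rightarrow> bool" where
  "agree_near s y t \<longleftrightarrow>
     (\<exists>d. y \<in> cyl d \<and> smult G act res s (idem G d) = smult G act res t (idem G d))"

lemma mem_germ_iff:
  "(t, z) \<in> germ G act res s y \<longleftrightarrow>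
     z = y \<and> t \<in> Seq G \<and> t \<noteq> None \<and> y \<in> sdom t \<and> agree_near s y t"
  by (auto simp: germ_def agree_near_def)

lemma agree_near_refl: "agree_near s y s"
  unfolding agree_near_def by (metis cyl_Nil UNIV_I)

lemma agree_near_sym: "agree_near s y t \<Longrightarrow> agree_near t y s"
  unfolding agree_near_def by metis

lemma agree_near_longer:
  assumes s: "s \<in> Seq G" "s \<noteq> None" "y \<in> sdom s"
    and t: "t \<in> Seq G" "t \<noteq> None" "y \<in> sdom t"
    and d: "y \<in> cyl d" "smult G act res s (idem G d) = smult G act res t (idem G d)"
    and e: "y \<in> cyl e" "length d \<le> length e"
  shows "smult G act res s (idem G e) = smult G act res t (idem G e)"
  using d smult_idem_idem[OF s(1-3) d(1) e] smult_idem_idem[OF t(1-3) d(1) e]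
  by simp

lemma agree_near_trans:
  assumes s: "s \<in> Seq G" "s \<noteq> None" "y \<in> sdom s"
    and t: "t \<in> Seq G" "t \<noteq> None" "y \<in> sdom t"
    and r: "r \<in> Seq G" "r \<noteq> None" "y \<in> sdom r"
    and "agree_near s y t" "agree_near t y r"
  shows "agree_near s y r"
proof -
  obtain d d' where d: "y \<in> cyl d" "smult G act res s (idem G d) = smult G act res t (idem G d)"
    and d': "y \<in> cyl d'" "smult G act res t (idem G d') = smult G act res r (idem G d')"
    using assms(10,11) by (auto simp: agree_near_def)
  let ?e = "seq_prefix y (max (length d) (length d'))"
  have "smult G act res s (idem G ?e) = smult G act res t (idem G ?e)"
    using agree_near_longer[OF s t d] by simp
  also have "\<dots> = smult G act res r (idem G ?e)"
    using agree_near_longer[OF t r d'] by simp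
  finally show ?thesis unfolding agree_near_def using mem_cyl_seq_prefix by blast
qed

lemma germ_self:
  assumes "s \<in> Seq G" "s \<noteq> None" "y \<in> sdom s"
  shows "(s, y) \<in> germ G act res s y"
  using assms by (simp add: mem_germ_iff agree_near_refl)

lemma germ_eqI:
  assumes s: "s \<in> Seq G" "s \<noteq> None" "y \<in> sdom s"
    and t: "t \<in> Seq G" "t \<noteq> None" "y \<in> sdom t"
    and "agree_near s y t"
  shows "germ G act res s y = germ G act res t y"
proof -
  have "agree_near s y r \<longleftrightarrow> agree_near t y r" if "r \<in> Seq G" "r \<noteq> None" "y \<in> sdom r" for r
    using agree_near_trans[OF s t that] agree_near_trans[OF t s that] assms(7) agree_near_sym by blast
  then show ?thesis by (auto simp: set_eq_iff mem_germ_iff)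
qed

lemma germ_eqD:
  assumes "s \<in> Seq G" "s \<noteq> None" "y \<in> sdom s"
    and "germ G act res s y = germ G act res t z"
  shows "z = y" "agree_near t y s"
  using germ_self[OF assms(1-3)] assms(4) by (simp_all add: mem_germ_iff)

lemma germ_eq_nearby:
  assumes s: "s \<in> Seq G" "s \<noteq> None" "y \<in> sdom s"
    and t: "t \<in> Seq G" "t \<noteq> None" "y \<in> sdom t"
    and "germ G act res s y = germ G act res t y"
  obtains n where "cyl (seq_prefix y n) \<subseteq> sdom s"
    and "\<And>z. z \<in> cyl (seq_prefix y n) \<Longrightarrow> germ G act res s z = germ G act res t z"
proof -
  obtain d where d: "y \<in> cyl d" "smult G act res t (idem G d) = smult G act res s (idem G d)"
    using germ_eqD(2)[OF s assms(7)] unfolding agree_near_def by blast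
  obtain a g b where s': "s = Some (a, g, b)" using s(1,2) by (rule Seq_cases)
  obtain a' g' b' where t': "t = Some (a', g', b')" using t(1,2) by (rule Seq_cases)
  define n where "n = max (length d) (max (length b) (length b'))"
  have "y \<in> cyl b" "y \<in> cyl b'" using s(3) t(3) by (simp_all add: s' t')
  then have "cyl (seq_prefix y n) \<subseteq> cyl d \<inter> cyl b \<inter> cyl b'"
    using cyl_seq_prefix_subset[OF d(1)] cyl_seq_prefix_subset[of y b n]
      cyl_seq_prefix_subset[of y b' n] by (simp add: n_def)
  then have near: "z \<in> cyl d" "z \<in> sdom s" "z \<in> sdom t" if "z \<in> cyl (seq_prefix y n)" for z
    using that by (auto simp: s' t')
  have "cyl (seq_prefix y n) \<subseteq> sdom s" using near(2) by blast
  moreover have "germ G act res s z = germ G act res t z" if "z \<in> cyl (seq_prefix y n)" for z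
    using near[OF that] d(2) s(1,2) t(1,2) by (intro germ_eqI) (auto simp: agree_near_def)
  ultimately show ?thesis using that by blast
qed

lemma gdom_germ:
  assumes "s \<in> Seq G" "s \<noteq> None" "y \<in> sdom s"
  shows "gdom (germ G act res s y) = y"
  unfolding gdom_def
proof (rule the_equality)
  show "\<exists>t. (t, y) \<in> germ G act res s y" using germ_self[OF assms] by blast
qed (simp add: mem_germ_iff)

lemma srng_agree_near:
  assumes s: "s \<in> Seq G" "s \<noteq> None" "y \<in> sdom s"
    and t: "t \<in> Seq G" "t \<noteq> None" "y \<in> sdom t"
    and "agree_near s y t"
  shows "srng act res t y = srng act res s y"
  using assms(7) srng_smult_idem[OF s] srng_smult_idem[OF t] unfolding agree_near_def by metis

lemma grng_germ:
  assumes "s \<in> Seq G" "s \<noteq> None" "y \<in> sdom s"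
  shows "grng act res (germ G act res s y) = srng act res s y"
  unfolding grng_def
proof (rule the_equality)
  show "\<exists>t z. (t, z) \<in> germ G act res s y \<and> srng act res s y = srng act res t z"
    using germ_self[OF assms] by blast
  fix x assume "\<exists>t z. (t, z) \<in> germ G act res s y \<and> x = srng act res t z"
  then show "x = srng act res s y" using srng_agree_near[OF assms] by (auto simp: mem_germ_iff)
qed

section \<open>The topology of the tight groupoid\<close>

lemma openin_sdom: "s \<in> Seq G \<Longrightarrow> s \<noteq> None \<Longrightarrow> openin cantor_top (sdom s)"
  by (auto elim!: Seq_cases simp: openin_cantor_cyl)

lemma closedin_sdom: "s \<in> Seq G \<Longrightarrow> s \<noteq> None \<Longrightarrow> closedin cantor_top (sdom s)"
  by (auto elim!: Seq_cases simp: closedin_cantor_cyl)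

lemma openin_germ_image:
  assumes "s \<in> Seq G" "s \<noteq> None" "openin cantor_top U" "U \<subseteq> sdom s"
  shows "openin (groupoid_top G act res) (germ G act res s ` U)"
  unfolding groupoid_top_def openin_topology_generated_by_iff
  by (rule generate_topology_on.Basis) (use assms in blast)

lemma openin_germ_preimage_germ_image:
  assumes s: "s \<in> Seq G" "s \<noteq> None"
    and t: "t \<in> Seq G" "t \<noteq> None" and V: "openin cantor_top V" "V \<subseteq> sdom t"
  shows "openin cantor_top {y \<in> sdom s. germ G act res s y \<in> germ G act res t ` V}"
  unfolding openin_cantor_iff
proof
  let ?U = "{y \<in> sdom s. germ G act res s y \<in> germ G act res t ` V}"
  fix y assume "y \<in> ?U"
  then obtain y0 where y: "y \<in> sdom s" "y0 \<in> V" "germ G act res s y = germ G act res t y0"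
    by blast
  then have "y0 = y" using germ_eqD(1)[OF s] by simp
  obtain n where n: "cyl (seq_prefix y n) \<subseteq> sdom s"
    "\<And>z. z \<in> cyl (seq_prefix y n) \<Longrightarrow> germ G act res s z = germ G act res t z"
    using germ_eq_nearby[OF s y(1) t] y V(2) \<open>y0 = y\<close> by blast
  obtain n' where n': "cyl (seq_prefix y n') \<subseteq> V"
    using V(1) y(2) \<open>y0 = y\<close> unfolding openin_cantor_iff by blast
  have "cyl (seq_prefix y (max n n')) \<subseteq> ?U"
    using n n' cyl_seq_prefix_mono[of n "max n n'" y] cyl_seq_prefix_mono[of n' "max n n'" y]
    by fastforce
  then show "\<exists>m. cyl (seq_prefix y m) \<subseteq> ?U" by blast
qed

lemma openin_germ_preimage:
  assumes "openin (groupoid_top G act res) U" "s \<in> Seq G" "s \<noteq> None"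
  shows "openin cantor_top {y \<in> sdom s. germ G act res s y \<in> U}"
proof -
  have "generate_topology_on {germ G act res t ` V | t V. t \<in> Seq G \<and> t \<noteq> None \<and>
      openin cantor_top V \<and> V \<subseteq> sdom t} U"
    using assms(1) unfolding groupoid_top_def by (rule openin_topology_generated_by)
  then show ?thesis
  proof induction
    case (Int U V)
    have "{y \<in> sdom s. germ G act res s y \<in> U \<inter> V}
        = {y \<in> sdom s. germ G act res s y \<in> U} \<inter> {y \<in> sdom s. germ G act res s y \<in> V}"
      by blast
    then show ?case using Int.IH by (simp add: openin_Int)
  next
    case (UN K)
    have "{y \<in> sdom s. germ G act res s y \<in> \<Union> K} = (\<Union>U\<in>K. {y \<in> sdom s. germ G act res s y \<in> U})"
      by blast
    then show ?case using UN.IH by (auto intro!: openin_Union)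
  next
    case (Basis X)
    then show ?case using openin_germ_preimage_germ_image[OF assms(2,3)] by blast
  qed simp
qed

lemma continuous_map_germ:
  assumes "s \<in> Seq G" "s \<noteq> None"
  shows "continuous_map (subtopology cantor_top (sdom s)) (groupoid_top G act res) (germ G act res s)"
  unfolding continuous_map
proof (intro conjI allI impI)
  have "openin (groupoid_top G act res) (germ G act res s ` sdom s)"
    using assms by (simp add: openin_germ_image openin_sdom)
  then show "germ G act res s ` topspace (subtopology cantor_top (sdom s))
      \<subseteq> topspace (groupoid_top G act res)"
    by (simp add: openin_subset)
  fix U assume "openin (groupoid_top G act res) U"
  then show "openin (subtopology cantor_top (sdom s))
      {y \<in> topspace (subtopology cantor_top (sdom s)). germ G act res s y \<in> U}"
    using assms by (simp add: openin_open_subtopology openin_sdom openin_germ_preimage)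
qed

lemma compactin_germ_image:
  assumes "s \<in> Seq G" "s \<noteq> None"
  shows "compactin (groupoid_top G act res) (germ G act res s ` sdom s)"
proof (rule image_compactin[OF _ continuous_map_germ[OF assms]])
  show "compactin (subtopology cantor_top (sdom s)) (sdom s)"
    using closed_compactin[OF compact_cantor subset_UNIV closedin_sdom[OF assms]]
    by (simp add: compactin_subtopology)
qed

lemma slice_bisection:
  assumes "g \<in> carrier G" "length a = length b"
  defines "B \<equiv> germ G act res (Some (a, g, b)) ` cyl b"
  shows "compact_open_bisection G act res B" "gdom ` B = cyl b" "grng act res ` B = cyl a"
proof -
  let ?s = "Some (a, g, b)"
  have s: "?s \<in> Seq G" "?s \<noteq> None" "sdom ?s = cyl b" using assms(1,2) by simp_all
  have gdom: "gdom (germ G act res ?s y) = y" if "y \<in> cyl b" for y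
    using gdom_germ[OF s(1,2)] that s(3) by simp
  have grng: "grng act res (germ G act res ?s y) = srng act res ?s y" if "y \<in> cyl b" for y
    using grng_germ[OF s(1,2)] that s(3) by simp
  show "gdom ` B = cyl b" unfolding B_def image_image using gdom by simp
  have "grng act res ` B = srng act res ?s ` cyl (b @ [])"
    unfolding B_def image_image using grng by simp
  then show "grng act res ` B = cyl a" using assms(1) by (simp only: srng_image_cyl) simp
  have "inj_on (srng act res ?s) (cyl b)"
  proof
    fix y z assume "y \<in> cyl b" "z \<in> cyl b" "srng act res ?s y = srng act res ?s z"
    then have "omega_act act res g (shift (length b) y) = omega_act act res g (shift (length b) z)"
      unfolding srng_Some by (metis shift_prepend)
    then have "shift (length b) y = shift (length b) z"
      using inj_omega_act[OF assms(1)] by (simp add: inj_eq)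
    then show "y = z" using prepend_shift \<open>y \<in> cyl b\<close> \<open>z \<in> cyl b\<close> by metis
  qed
  then show "compact_open_bisection G act res B"
    unfolding compact_open_bisection_def
  proof (intro conjI)
    show "B \<subseteq> tight_groupoid G act res"
      unfolding B_def tight_groupoid_def using s by blast
    show "openin (groupoid_top G act res) B"
      unfolding B_def using s openin_germ_image[OF s(1,2) openin_cantor_cyl] by simp
    show "compactin (groupoid_top G act res) B"
      unfolding B_def using compactin_germ_image[OF s(1,2)] s(3) by simp
  qed (auto simp: B_def inj_on_def gdom grng)
qed

section \<open>Invariance of the uniform mean\<close>

text \<open>
  Requiring \<open>c\<close> to extend the source word of \<open>s\<close> makes \<open>s\<close> carry \<open>C(c)\<close> onto a
  cylinder of the same length (\<open>slice_in_srng_image\<close>).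
\<close>

definition slice_in :: "('g, 'x) germ set \<Rightarrow> ('g, 'x) elt \<Rightarrow> 'x list \<Rightarrow> bool" where
  "slice_in B s c \<longleftrightarrow>
     (\<exists>a g b v. s = Some (a, g, b) \<and> g \<in> carrier G \<and> length a = length b \<and> c = b @ v) \<and>
     germ G act res s ` cyl c \<subseteq> B"

lemma slice_in_append: "slice_in B s c \<Longrightarrow> slice_in B s (c @ u)"
  unfolding slice_in_def using cyl_append_subset by fastforce

lemma slice_inD:
  assumes "slice_in B s c" "y \<in> cyl c"
  shows "germ G act res s y \<in> B" "gdom (germ G act res s y) = y"
    "grng act res (germ G act res s y) = srng act res s y"
proof -
  obtain a g b v where "s = Some (a, g, b)" "g \<in> carrier G" "length a = length b" "c = b @ v"
    using assms(1) unfolding slice_in_def by blast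
  moreover have "y \<in> cyl b" using assms(2) cyl_append_subset \<open>c = b @ v\<close> by blast
  ultimately show "gdom (germ G act res s y) = y" "grng act res (germ G act res s y) = srng act res s y"
    by (simp_all add: gdom_germ grng_germ)
  show "germ G act res s y \<in> B" using assms unfolding slice_in_def by blast
qed

lemma slice_in_srng_image:
  assumes "slice_in B s c"
  obtains u where "length u = length c" "srng act res s ` cyl c = cyl u"
proof -
  obtain a g b v where "s = Some (a, g, b)" "g \<in> carrier G" "length a = length b" "c = b @ v"
    using assms unfolding slice_in_def by blast
  then show ?thesis using that[of "a @ act g v"] by (simp add: srng_image_cyl)
qed

lemma open_bisection_slice_in:
  assumes "openin (groupoid_top G act res) B" "B \<subseteq> tight_groupoid G act res" "\<gamma> \<in> B"
  obtains s c where "slice_in B s c" "\<gamma> \<in> germ G act res s ` cyl c"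
proof -
  obtain s y where \<gamma>: "\<gamma> = germ G act res s y" "s \<in> Seq G" "s \<noteq> None" "y \<in> sdom s"
    using assms(2,3) unfolding tight_groupoid_def by blast
  obtain a g b where s: "s = Some (a, g, b)" "g \<in> carrier G" "length a = length b"
    using \<gamma>(2,3) by (rule Seq_cases)
  obtain n where n: "cyl (seq_prefix y n) \<subseteq> {y \<in> sdom s. germ G act res s y \<in> B}"
    using openin_germ_preimage[OF assms(1) \<gamma>(2,3)] \<gamma> assms(3)
    unfolding openin_cantor_iff by blast
  define c where "c = seq_prefix y (max n (length b))"
  have "y \<in> cyl b" using \<gamma>(4) s(1) by simp
  then have "c = b @ drop (length b) c"
    unfolding c_def by (metis append_take_drop_id max.cobounded2 mem_cyl_iff take_seq_prefix)
  moreover have "cyl c \<subseteq> cyl (seq_prefix y n)"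
    unfolding c_def by (simp add: cyl_seq_prefix_mono)
  ultimately have "slice_in B s c"
    unfolding slice_in_def using s n by blast
  moreover have "\<gamma> \<in> germ G act res s ` cyl c"
    using \<gamma>(1) unfolding c_def by simp
  ultimately show ?thesis by (rule that)
qed

lemma compact_bisection_finite_slices:
  assumes "compact_open_bisection G act res B"
  obtains Q where "finite Q" "\<And>s c. (s, c) \<in> Q \<Longrightarrow> slice_in B s c"
    and "B \<subseteq> (\<Union>(s, c)\<in>Q. germ G act res s ` cyl c)"
proof -
  have B: "openin (groupoid_top G act res) B" "compactin (groupoid_top G act res) B"
    "B \<subseteq> tight_groupoid G act res"
    using assms unfolding compact_open_bisection_def by auto
  define Q where "Q = {(s, c). slice_in B s c}"
  define slice where "slice = (\<lambda>(s, c). germ G act res s ` cyl c)"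
  have cover: "B \<subseteq> \<Union> (slice ` Q)"
  proof
    fix \<gamma> assume "\<gamma> \<in> B"
    then obtain s c where "slice_in B s c" "\<gamma> \<in> germ G act res s ` cyl c"
      using open_bisection_slice_in[OF B(1,3)] by blast
    then show "\<gamma> \<in> \<Union> (slice ` Q)" unfolding Q_def slice_def by force
  qed
  have open_slices: "openin (groupoid_top G act res) U" if U: "U \<in> slice ` Q" for U
  proof -
    obtain s c where "slice_in B s c" "U = germ G act res s ` cyl c"
      using U unfolding Q_def slice_def by auto
    then obtain a g b v where "U = germ G act res (Some (a, g, b)) ` cyl (b @ v)"
      "g \<in> carrier G" "length a = length b"
      unfolding slice_in_def by blast
    then show ?thesis
      using openin_germ_image[of "Some (a, g, b)" "cyl (b @ v)"] cyl_append_subset[of b v]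
      by (simp add: openin_cantor_cyl)
  qed
  obtain \<F> where \<F>: "finite \<F>" "\<F> \<subseteq> slice ` Q" "B \<subseteq> \<Union> \<F>"
    using compactinD[OF B(2) open_slices cover] by blast
  obtain Qf where "finite Qf" "Qf \<subseteq> Q" "B \<subseteq> \<Union> (slice ` Qf)"
    using finite_subset_image[OF \<F>(1,2)] \<F>(3) by blast
  then show ?thesis using that[of Qf] unfolding Q_def slice_def by blast
qed

lemma gdom_image_slices:
  assumes "\<And>s c. (s, c) \<in> Q \<Longrightarrow> slice_in B s c"
    and "B \<subseteq> (\<Union>(s, c)\<in>Q. germ G act res s ` cyl c)"
  shows "gdom ` B = (\<Union>(s, c)\<in>Q. cyl c)"
proof (intro equalityI subsetI)
  fix y assume "y \<in> gdom ` B"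
  then obtain s c y' where "(s, c) \<in> Q" "y' \<in> cyl c" "y = gdom (germ G act res s y')"
    using assms(2) by fastforce
  then show "y \<in> (\<Union>(s, c)\<in>Q. cyl c)" using assms(1) slice_inD(2) by fastforce
next
  fix y assume "y \<in> (\<Union>(s, c)\<in>Q. cyl c)"
  then obtain s c where "(s, c) \<in> Q" "y \<in> cyl c" by blast
  then show "y \<in> gdom ` B" using assms(1) slice_inD(1,2) by force
qed

lemma compact_open_bisection_local_slices:
  assumes "compact_open_bisection G act res B"
  obtains N \<sigma> where "determined N (gdom ` B)"
    and "\<And>w. w \<in> level_words N (gdom ` B) \<Longrightarrow> slice_in B (\<sigma> w) w"
proof -
  obtain Q where Q: "finite Q" "\<And>s c. (s, c) \<in> Q \<Longrightarrow> slice_in B s c"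
    and cover: "B \<subseteq> (\<Union>(s, c)\<in>Q. germ G act res s ` cyl c)"
    using compact_bisection_finite_slices[OF assms] by blast
  define N where "N = Max (insert 0 ((length \<circ> snd) ` Q))"
  have N: "length c \<le> N" if "(s, c) \<in> Q" for s c
  proof -
    have "length c \<in> insert 0 ((length \<circ> snd) ` Q)" using that by force
    then show ?thesis unfolding N_def using Q(1) by simp
  qed
  have dom: "gdom ` B = (\<Union>(s, c)\<in>Q. cyl c)"
    using gdom_image_slices[OF Q(2) cover] .
  have "determined N (gdom ` B)"
    unfolding dom by (rule determined_Union) (use N determined_cyl in fastforce)
  moreover have "\<forall>w\<in>level_words N (gdom ` B). \<exists>s. slice_in B s w"
  proof
    fix w assume w: "w \<in> level_words N (gdom ` B)"
    obtain y where y: "y \<in> cyl w" using cyl_nonempty by blast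
    moreover have "cyl w \<subseteq> (\<Union>(s, c)\<in>Q. cyl c)"
      using w unfolding dom level_words_def by simp
    ultimately obtain s c where sc: "(s, c) \<in> Q" "y \<in> cyl c" by blast
    have "length c \<le> length w" using N[OF sc(1)] w by (simp add: level_words_def)
    then have "prefix c w"
      using cyl_prefix_cases[OF y sc(2)] prefix_length_prefix[of c c w] by auto
    then show "\<exists>s. slice_in B s w" using Q(2)[OF sc(1)] slice_in_append unfolding prefix_def by blast
  qed
  then obtain \<sigma> where "\<And>w. w \<in> level_words N (gdom ` B) \<Longrightarrow> slice_in B (\<sigma> w) w"
    by (metis bchoice)
  ultimately show ?thesis by (rule that)
qed

lemma slice_in_germ_gdom:
  assumes "inj_on gdom B" "slice_in B s c" "\<gamma> \<in> B" "gdom \<gamma> \<in> cyl c"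
  shows "\<gamma> = germ G act res s (gdom \<gamma>)"
proof (rule inj_onD[OF assms(1)])
  show "gdom \<gamma> = gdom (germ G act res s (gdom \<gamma>))"
    using slice_inD(2)[OF assms(2,4)] by simp
  show "germ G act res s (gdom \<gamma>) \<in> B"
    using slice_inD(1)[OF assms(2,4)] .
qed fact

lemma bisection_range_level_cyls:
  assumes B: "compact_open_bisection G act res B" and det: "determined N (gdom ` B)"
    and \<sigma>: "\<And>w. w \<in> level_words N (gdom ` B) \<Longrightarrow> slice_in B (\<sigma> w) w"
    and f: "\<And>w. w \<in> level_words N (gdom ` B) \<Longrightarrow> srng act res (\<sigma> w) ` cyl w = cyl (f w)"
  shows "grng act res ` B = \<Union> (cyl ` f ` level_words N (gdom ` B))"
proof (intro equalityI subsetI)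
  let ?W = "level_words N (gdom ` B)"
  fix z assume "z \<in> grng act res ` B"
  then obtain \<gamma> where \<gamma>: "\<gamma> \<in> B" "z = grng act res \<gamma>" by blast
  let ?y = "gdom \<gamma>" and ?w = "seq_prefix (gdom \<gamma>) N"
  have w: "?w \<in> ?W" using det \<gamma>(1) unfolding determined_def level_words_def by auto
  have y: "?y \<in> cyl ?w" by simp
  have "inj_on gdom B" using B unfolding compact_open_bisection_def by auto
  then have "z = grng act res (germ G act res (\<sigma> ?w) ?y)"
    using arg_cong[OF slice_in_germ_gdom[OF _ \<sigma>[OF w] \<gamma>(1) y], of "grng act res"] \<gamma>(2)
    by simp
  also have "\<dots> = srng act res (\<sigma> ?w) ?y" using slice_inD(3)[OF \<sigma>[OF w] y] .
  finally have "z \<in> cyl (f ?w)" using f[OF w] y by blast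
  then show "z \<in> \<Union> (cyl ` f ` ?W)" using w by blast
next
  fix z assume "z \<in> \<Union> (cyl ` f ` level_words N (gdom ` B))"
  then obtain w y where "w \<in> level_words N (gdom ` B)" "y \<in> cyl w" "z = srng act res (\<sigma> w) y"
    using f by blast
  then show "z \<in> grng act res ` B" using slice_inD(1,3)[OF \<sigma>] by (metis image_eqI)
qed

lemma inj_on_bisection_level_cyls:
  assumes B: "compact_open_bisection G act res B"
    and \<sigma>: "\<And>w. w \<in> level_words N (gdom ` B) \<Longrightarrow> slice_in B (\<sigma> w) w"
    and f: "\<And>w. w \<in> level_words N (gdom ` B) \<Longrightarrow> srng act res (\<sigma> w) ` cyl w = cyl (f w)"
  shows "inj_on f (level_words N (gdom ` B))"
proof
  fix w1 w2 assume w: "w1 \<in> level_words N (gdom ` B)" "w2 \<in> level_words N (gdom ` B)" "f w1 = f w2"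
  have inj: "inj_on (grng act res) B" using B unfolding compact_open_bisection_def by auto
  obtain z where "z \<in> cyl (f w1)" using cyl_nonempty by blast
  then obtain y1 y2 where y: "y1 \<in> cyl w1" "y2 \<in> cyl w2"
    "srng act res (\<sigma> w1) y1 = srng act res (\<sigma> w2) y2"
    using f[OF w(1)] f[OF w(2)] w(3) by (metis imageE)
  then have "germ G act res (\<sigma> w1) y1 = germ G act res (\<sigma> w2) y2"
    using inj_onD[OF inj] slice_inD[OF \<sigma>[OF w(1)] y(1)] slice_inD[OF \<sigma>[OF w(2)] y(2)] by metis
  then have "y1 = y2" using slice_inD(2)[OF \<sigma>[OF w(1)] y(1)] slice_inD(2)[OF \<sigma>[OF w(2)] y(2)] by metis
  moreover have "length w1 = N" "length w2 = N" using w(1,2) by (simp_all add: level_words_def)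
  ultimately show "w1 = w2" using y(1,2) by (metis mem_cyl_iff)
qed

lemma uniform_mean_bisection_invariant:
  assumes "compact_open_bisection G act res B"
  shows "uniform_mean (gdom ` B) = uniform_mean (grng act res ` B)"
proof -
  obtain N \<sigma> where det: "determined N (gdom ` B)"
    and \<sigma>: "\<And>w. w \<in> level_words N (gdom ` B) \<Longrightarrow> slice_in B (\<sigma> w) w"
    using compact_open_bisection_local_slices[OF assms] by blast
  let ?W = "level_words N (gdom ` B)"
  have "\<forall>w\<in>?W. \<exists>u. length u = N \<and> srng act res (\<sigma> w) ` cyl w = cyl u"
  proof
    fix w assume w: "w \<in> ?W"
    obtain u where "length u = length w" "srng act res (\<sigma> w) ` cyl w = cyl u"
      using slice_in_srng_image[OF \<sigma>[OF w]] .
    then show "\<exists>u. length u = N \<and> srng act res (\<sigma> w) ` cyl w = cyl u"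
      using w by (auto simp: level_words_def)
  qed
  then obtain f where f: "\<And>w. w \<in> ?W \<Longrightarrow> length (f w) = N"
    "\<And>w. w \<in> ?W \<Longrightarrow> srng act res (\<sigma> w) ` cyl w = cyl (f w)"
    by (metis bchoice)
  note range_eq = bisection_range_level_cyls[OF assms det \<sigma> f(2)]
    and inj = inj_on_bisection_level_cyls[OF assms \<sigma> f(2)]
  have "f ` ?W \<subseteq> {u. length u = N}" using f(1) by blast
  then have "uniform_mean (\<Union> (cyl ` f ` ?W)) = real (card (f ` ?W)) / real CARD('x) ^ N"
    by (rule uniform_mean_Union_cyl)
  then have "uniform_mean (grng act res ` B) = real (card (f ` ?W)) / real CARD('x) ^ N"
    by (simp only: range_eq)
  also have "\<dots> = uniform_mean (gdom ` B)"
    using uniform_mean_eq[OF det] inj by (simp add: card_image)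
  finally show ?thesis by simp
qed

section \<open>Uniqueness\<close>

lemma invariant_mean_cyl:
  assumes "normalized_invariant_mean G act res \<nu>"
  shows "\<nu> (cyl w) = inverse (real CARD('x) ^ length w)"
proof -
  have one: "\<nu> UNIV = 1"
    and inv: "\<And>B. compact_open_bisection G act res B \<Longrightarrow> \<nu> (gdom ` B) = \<nu> (grng act res ` B)"
    and add: "\<And>E F. clopen E \<Longrightarrow> clopen F \<Longrightarrow> E \<inter> F = {} \<Longrightarrow> \<nu> (E \<union> F) = \<nu> E + \<nu> F"
    using assms unfolding normalized_invariant_mean_def by auto
  define V where "V = {u :: 'x list. length u = length w}"
  have same: "\<nu> (cyl u) = \<nu> (cyl w)" if "u \<in> V" for u
  proof -
    have len: "length w = length u" using that by (simp add: V_def)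
    show ?thesis
      using inv[OF slice_bisection(1)[OF one_closed len]] slice_bisection(2,3)[OF one_closed len]
      by simp
  qed
  have "\<Union> (cyl ` V) = UNIV"
    unfolding V_def using mem_cyl_seq_prefix length_seq_prefix by blast
  then have "1 = \<nu> (\<Union> (cyl ` V))" using one by simp
  also have "\<dots> = (\<Sum>u\<in>V. \<nu> (cyl u))"
    by (rule additive_Union_cyl[OF add]) (auto simp: V_def)
  also have "\<dots> = (\<Sum>u\<in>V. \<nu> (cyl w))" using sum.cong[OF refl same] .
  also have "\<dots> = real (CARD('x) ^ length w) * \<nu> (cyl w)"
    unfolding V_def using card_lists_length_eq[of "UNIV :: 'x set"] by simp
  finally show ?thesis by (simp add: field_simps)
qed

lemma invariant_mean_eq_uniform_mean:
  assumes "normalized_invariant_mean G act res \<nu>" "clopen E"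
  shows "\<nu> E = uniform_mean E"
proof -
  obtain N where N: "determined N E" using assms(2) clopen_iff_determined by blast
  have add: "\<And>E F. clopen E \<Longrightarrow> clopen F \<Longrightarrow> E \<inter> F = {} \<Longrightarrow> \<nu> (E \<union> F) = \<nu> E + \<nu> F"
    using assms(1) unfolding normalized_invariant_mean_def by auto
  have "level_words N E \<subseteq> {w. length w = N}" by (auto simp: level_words_def)
  then have "\<nu> (\<Union> (cyl ` level_words N E)) = (\<Sum>w\<in>level_words N E. \<nu> (cyl w))"
    using additive_Union_cyl[OF add] by blast
  then have "\<nu> E = (\<Sum>w\<in>level_words N E. \<nu> (cyl w))"
    by (simp only: Union_cyl_level_words[OF N])
  also have "\<dots> = real (card (level_words N E)) * inverse (real CARD('x) ^ N)"
    by (simp add: invariant_mean_cyl[OF assms(1)] level_words_def)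
  also have "\<dots> = uniform_mean E"
    by (simp add: uniform_mean_eq[OF N] field_simps)
  finally show ?thesis .
qed

lemma normalized_invariant_mean_uniform_mean: "normalized_invariant_mean G act res uniform_mean"
  unfolding normalized_invariant_mean_def
  using uniform_mean_nonneg uniform_mean_UNIV uniform_mean_bisection_invariant uniform_mean_additive
  by blast

end

theorem mainTheorem17:
  fixes G :: "('g,'b) monoid_scheme"
    and act :: "'g \<Rightarrow> ('x::finite) list \<Rightarrow> 'x list"
    and res :: "'g \<Rightarrow> 'x \<Rightarrow> 'g"
  assumes "self_similar G act res"
  shows "\<exists>\<mu>. normalized_invariant_mean G act res \<mu> \<and>
             (\<forall>a::'x list. \<mu> (cyl a) = inverse (real CARD('x) ^ length a)) \<and>
             (\<forall>\<nu>. normalized_invariant_mean G act res \<nu> \<longrightarrow>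
                   (\<forall>E. clopen E \<longrightarrow> \<nu> E = \<mu> E))"
proof -
  interpret self_similar_group G act res by (rule self_similar_group.intro[OF assms])
  show ?thesis
  proof (intro exI conjI allI impI)
    show "normalized_invariant_mean G act res uniform_mean"
      by (rule normalized_invariant_mean_uniform_mean)
    show "uniform_mean (cyl a) = inverse (real CARD('x) ^ length a)" for a :: "'x list"
      by (rule uniform_mean_cyl)
    show "\<nu> E = uniform_mean E" if "normalized_invariant_mean G act res \<nu>" "clopen E" for \<nu> E
      using that by (rule invariant_mean_eq_uniform_mean)
  qed
qed

end
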